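(* Let $u$ and $v$ be robots on the same ring $r$ of an $m$-partial SCS. Then $u$ prevents $v$ from starving if and only if $r$ has a tie whose length equals the length of a simple path (along $r$) between $u$ and $v$.
   Context: Let $T=\{C_1,\dots,C_n\}$ be pairwise disjoint unit circles in the plane (trajectories) and $\epsilon<0.5$ a communication range. The graph of potential links $G_\epsilon(T)$ has the circle centers as nodes and an edge $\{i,j\}$ whenever the centers of $C_i,C_j$ are at distance at most $2+\epsilon$; it is assumed connected. Points of a circle are identified with angles (modulo $2\pi$), and a robot traverses a circle in one time unit. A schedule is a pair $(f,g)$, $f:T\to[0,2\pi)$, $g:T\to\{-1,1\}$ ($1$ = counterclockwise); the robot on $C_i$ is at angle $f(C_i)+2\pi g(C_i)t$ at time $t$. A communication graph $G=(V,E)$ is a connected spanning subgraph of $G_\epsilon(T)$. The link position $\phi_{ij}$ is the point of $C_i$ closest to $C_j$. A schedule is $G$-synchronized if for every $\{i,j\}\in E$ the robot on $C_i$ is at $\phi_{ij}$ exactly when the robot on $C_j$ is at $\phi_{ji}$. An SCS with communication graph $G$ consists of $n$ robots, one per circle, moving under a $G$-synchronized schedule with $g(C_i)=-g(C_j)$ for all $\{i,j\}\in E$. Shifting protocol: when a robot on $C_i$ reaches $\phi_{ij}$ and there is no robot at $\phi_{ji}$, it moves to $C_j$ and thereafter follows the schedule of $C_j$. An $m$-partial SCS is obtained by removing $n-m$ robots, the remaining $m$ applying the shifting protocol. A surviving robot starves if every time it arrives at a link position the corresponding neighbor is absent. A ring is the closed path traversed by a starving robot (following the assigned direction on each circle and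 always shifting to the neighboring circle at link positions). The length of a path along a ring is the total length of circle arcs it traverses, with multiplicity, ignoring transitions between circles; a path in a ring follows its travel direction and may contain full tours; it is simple if it contains no full tour. The crossing point of neighboring circles $C_i,C_j$ is the midpoint of the segment joining $\phi_{ij}$ and $\phi_{ji}$; a ring crosses itself at a crossing point if it traverses it in both directions ($C_i\to C_j$ and $C_j\to C_i$). A tie of a ring is a closed sub-path of the ring starting and ending at a crossing point where the ring crosses itself, without passing through that point in between. A robot $u'$ in ring $r'$ prevents a robot $u$ in ring $r$ from starving if there is a crossing point $c$ between $r$ and $r'$ (possibly $r=r'$) and two paths of equal length, one from the position of $u$ to $c$ in $r$ and one from the position of $u'$ to $c$ in $r'$. *)

theory Defs
  imports "HOL-Analysis.Analysis"
begin

(* Circles C_i (i < n) are the unit circles  sphere (cen i) 1  in the complex plane.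
   Angles are represented by the points they denote (so "mod 2 pi" is automatic). *)

definition pos :: "(nat \<Rightarrow> complex) \<Rightarrow> (nat \<Rightarrow> real) \<Rightarrow> (nat \<Rightarrow> int) \<Rightarrow> nat \<Rightarrow> real \<Rightarrow> complex" where
  "pos cen f g i t = cen i + cis (f i + 2 * pi * of_int (g i) * t)"

(* link position phi_ij: the point of C_i closest to C_j *)
definition lp :: "(nat \<Rightarrow> complex) \<Rightarrow> nat \<Rightarrow> nat \<Rightarrow> complex" where
  "lp cen i j = cen i + (cen j - cen i) / of_real (cmod (cen j - cen i))"

definition cp :: "(nat \<Rightarrow> complex) \<Rightarrow> nat \<Rightarrow> nat \<Rightarrow> complex" where
  "cp cen i j = (lp cen i j + lp cen j i) / 2"

definition pot_edges :: "nat \<Rightarrow> (nat \<Rightarrow> complex) \<Rightarrow> real \<Rightarrow> (nat \<times> nat) set" where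
  "pot_edges n cen eps = {(i,j). i < n \<and> j < n \<and> i \<noteq> j \<and> dist (cen i) (cen j) \<le> 2 + eps}"

definition connected_on :: "nat set \<Rightarrow> (nat \<times> nat) set \<Rightarrow> bool" where
  "connected_on V R \<longleftrightarrow> (\<forall>i\<in>V. \<forall>j\<in>V. (i, j) \<in> (R \<inter> (V \<times> V))\<^sup>*)"

definition synchronized :: "(nat \<times> nat) set \<Rightarrow> (nat \<Rightarrow> complex) \<Rightarrow> (nat \<Rightarrow> real) \<Rightarrow> (nat \<Rightarrow> int) \<Rightarrow> bool" where
  "synchronized E cen f g \<longleftrightarrow>
     (\<forall>(i,j)\<in>E. \<forall>t::real. pos cen f g i t = lp cen i j \<longleftrightarrow> pos cen f g j t = lp cen j i)"

definition SCS :: "nat \<Rightarrow> (nat \<Rightarrow> complex) \<Rightarrow> real \<Rightarrow> (nat \<times> nat) set \<Rightarrow> (nat \<Rightarrow> real) \<Rightarrow> (nat \<Rightarrow> int) \<Rightarrow> bool" where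
  "SCS n cen eps E f g \<longleftrightarrow>
     0 < eps \<and> eps < 1/2 \<and>
     (\<forall>i<n. \<forall>j<n. i \<noteq> j \<longrightarrow> sphere (cen i) 1 \<inter> sphere (cen j) 1 = {}) \<and>
     connected_on {..<n} (pot_edges n cen eps) \<and>
     E \<subseteq> pot_edges n cen eps \<and> sym E \<and> connected_on {..<n} E \<and>
     (\<forall>i<n. 0 \<le> f i \<and> f i < 2 * pi) \<and>
     (\<forall>i<n. g i \<in> {-1, 1}) \<and>
     synchronized E cen f g \<and>
     (\<forall>(i,j)\<in>E. g i = - g j)"

definition hit :: "(nat \<times> nat) set \<Rightarrow> (nat \<Rightarrow> complex) \<Rightarrow> (nat \<Rightarrow> real) \<Rightarrow> (nat \<Rightarrow> int) \<Rightarrow> nat \<Rightarrow> real \<Rightarrow> nat \<Rightarrow> bool" where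
  "hit E cen f g i t j \<longleftrightarrow> (i, j) \<in> E \<and> pos cen f g i t = lp cen i j"

(* Event sequence of a starving robot which at time t0 is on circle i:
   ev k = (circle a_k, time tau_k) where at time tau_k the robot, on circle a_k, reaches a
   link position and shifts to circle a_(k+1).  (A robot sitting on a link position at time t0
   is regarded as arriving there, i.e. it shifts at time t0.) *)
fun ev :: "(nat \<times> nat) set \<Rightarrow> (nat \<Rightarrow> complex) \<Rightarrow> (nat \<Rightarrow> real) \<Rightarrow> (nat \<Rightarrow> int) \<Rightarrow> nat \<Rightarrow> real \<Rightarrow> nat \<Rightarrow> nat \<times> real" where
  "ev E cen f g i t0 0 = (i, Inf {s. t0 \<le> s \<and> (\<exists>j. hit E cen f g i s j)})"
| "ev E cen f g i t0 (Suc k) =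
     (let a = fst (ev E cen f g i t0 k); tau = snd (ev E cen f g i t0 k);
          b = (THE j. hit E cen f g a tau j)
      in (b, Inf {s. tau < s \<and> (\<exists>j. hit E cen f g b s j)}))"

(* circle on which the starving robot is at time s >= t0
   (on circle a_k during (tau_(k-1), tau_k]) *)
definition trc :: "(nat \<times> nat) set \<Rightarrow> (nat \<Rightarrow> complex) \<Rightarrow> (nat \<Rightarrow> real) \<Rightarrow> (nat \<Rightarrow> int) \<Rightarrow> nat \<Rightarrow> real \<Rightarrow> real \<Rightarrow> nat" where
  "trc E cen f g i t0 s = fst (ev E cen f g i t0 (LEAST k. s \<le> snd (ev E cen f g i t0 k)))"

(* the path of length l along the ring of the robot (circle i, time t0) ends at the point P.
   Lengths are arc lengths: a circle (length 2 pi) is traversed in one time unit. *)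
definition reaches :: "(nat \<times> nat) set \<Rightarrow> (nat \<Rightarrow> complex) \<Rightarrow> (nat \<Rightarrow> real) \<Rightarrow> (nat \<Rightarrow> int) \<Rightarrow> nat \<Rightarrow> real \<Rightarrow> complex \<Rightarrow> real \<Rightarrow> bool" where
  "reaches E cen f g i t0 P l \<longleftrightarrow>
     0 \<le> l \<and> pos cen f g (trc E cen f g i t0 (t0 + l / (2 * pi))) (t0 + l / (2 * pi)) = P"

definition crosses_dir :: "(nat \<times> nat) set \<Rightarrow> (nat \<Rightarrow> complex) \<Rightarrow> (nat \<Rightarrow> real) \<Rightarrow> (nat \<Rightarrow> int) \<Rightarrow> nat \<Rightarrow> real \<Rightarrow> nat \<Rightarrow> nat \<Rightarrow> real \<Rightarrow> bool" where
  "crosses_dir E cen f g i t0 a b l \<longleftrightarrow>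
     0 \<le> l \<and> (\<exists>k. snd (ev E cen f g i t0 k) = t0 + l / (2 * pi) \<and>
                 fst (ev E cen f g i t0 k) = a \<and> fst (ev E cen f g i t0 (Suc k)) = b)"

definition crosses :: "(nat \<times> nat) set \<Rightarrow> (nat \<Rightarrow> complex) \<Rightarrow> (nat \<Rightarrow> real) \<Rightarrow> (nat \<Rightarrow> int) \<Rightarrow> nat \<Rightarrow> real \<Rightarrow> complex \<Rightarrow> real \<Rightarrow> bool" where
  "crosses E cen f g i t0 c l \<longleftrightarrow> (\<exists>a b. crosses_dir E cen f g i t0 a b l \<and> cp cen a b = c)"

definition self_crosses :: "(nat \<times> nat) set \<Rightarrow> (nat \<Rightarrow> complex) \<Rightarrow> (nat \<Rightarrow> real) \<Rightarrow> (nat \<Rightarrow> int) \<Rightarrow> nat \<Rightarrow> real \<Rightarrow> complex \<Rightarrow> bool" where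
  "self_crosses E cen f g i t0 c \<longleftrightarrow>
     (\<exists>a b l1 l2. crosses_dir E cen f g i t0 a b l1 \<and> crosses_dir E cen f g i t0 b a l2 \<and> cp cen a b = c)"

definition tie_length :: "(nat \<times> nat) set \<Rightarrow> (nat \<Rightarrow> complex) \<Rightarrow> (nat \<Rightarrow> real) \<Rightarrow> (nat \<Rightarrow> int) \<Rightarrow> nat \<Rightarrow> real \<Rightarrow> real \<Rightarrow> bool" where
  "tie_length E cen f g i t0 T \<longleftrightarrow>
     (\<exists>c l1 l2. self_crosses E cen f g i t0 c \<and>
        crosses E cen f g i t0 c l1 \<and> crosses E cen f g i t0 c l2 \<and> l1 < l2 \<and>
        (\<forall>l. l1 < l \<and> l < l2 \<longrightarrow> \<not> crosses E cen f g i t0 c l) \<and>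
        T = l2 - l1)"

(* robot on circle i' prevents robot on circle i (both at time t0) from starving *)
definition prevents :: "(nat \<times> nat) set \<Rightarrow> (nat \<Rightarrow> complex) \<Rightarrow> (nat \<Rightarrow> real) \<Rightarrow> (nat \<Rightarrow> int) \<Rightarrow> nat \<Rightarrow> nat \<Rightarrow> real \<Rightarrow> bool" where
  "prevents E cen f g i' i t0 \<longleftrightarrow>
     (\<exists>c l. crosses E cen f g i t0 c l \<and> crosses E cen f g i' t0 c l)"

definition ring_simple_path :: "(nat \<times> nat) set \<Rightarrow> (nat \<Rightarrow> complex) \<Rightarrow> (nat \<Rightarrow> real) \<Rightarrow> (nat \<Rightarrow> int) \<Rightarrow> nat \<Rightarrow> nat \<Rightarrow> real \<Rightarrow> real \<Rightarrow> bool" where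
  "ring_simple_path E cen f g i j t0 l \<longleftrightarrow>
     reaches E cen f g i t0 (pos cen f g j t0) l \<and>
     (\<forall>l'. 0 < l' \<and> l' \<le> l \<longrightarrow> \<not> reaches E cen f g i t0 (pos cen f g i t0) l')"

definition same_ring :: "(nat \<times> nat) set \<Rightarrow> (nat \<Rightarrow> complex) \<Rightarrow> (nat \<Rightarrow> real) \<Rightarrow> (nat \<Rightarrow> int) \<Rightarrow> nat \<Rightarrow> nat \<Rightarrow> real \<Rightarrow> bool" where
  "same_ring E cen f g i j t0 \<longleftrightarrow> (\<exists>l. reaches E cen f g i t0 (pos cen f g j t0) l)"

(* configuration of an m-partial SCS at some time: the set occ of occupied circles
   (one robot per occupied circle, each at the scheduled position of its circle) *)
definition partial_config :: "nat \<Rightarrow> nat \<Rightarrow> nat set \<Rightarrow> bool" where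
  "partial_config n m occ \<longleftrightarrow> occ \<subseteq> {..<n} \<and> card occ = m"

end

theory Submission
  imports Defs
begin

(* A starving robot is described by its events: the circles it visits and the times at which it
   shifts.  Link times recur with period one, so a robot that reaches the scheduled position of
   another robot after a path of length 2 pi K continues exactly like that robot delayed by K.
   Hence the ring seen from v is the ring seen from u shifted by the length d of the shortest path
   from u to v, and no link is crossed twice in the same direction within length d, as that would
   bring u back to its start earlier.  So if u and v reach a crossing point c after the same
   length l, then u crosses c at l and at l + d in opposite directions and not in between: a tie
   of length d.  Conversely, along a tie of length d the robot behind reaches c when the one ahead
   does. *)

lemma cis_eq_cis_imp_int:
  assumes "cis a = cis b"
  obtains k :: int where "a = b + 2 * pi * of_int k"
  using assms sin_cos_eq_iff[of a b] by (metis cis.sel(1) cis.sel(2))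

lemma Inf_minimum_if_finite_below:
  fixes T :: "'a::conditionally_complete_linorder set"
  assumes fin: "finite {s \<in> T. s \<le> x}" and "x \<in> T"
  shows "Inf T \<in> T" and "\<And>s. s \<in> T \<Longrightarrow> Inf T \<le> s"
proof -
  define m where "m = Min {s \<in> T. s \<le> x}"
  have m: "m \<in> T" "m \<le> x" unfolding m_def using Min_in[OF fin] \<open>x \<in> T\<close> by auto
  have m_least: "m \<le> s" if "s \<in> T" for s
    using that Min_le[OF fin] m(2) unfolding m_def by (cases "s \<le> x") auto
  have "Inf T = m" by (rule cInf_eq_minimum[OF m(1) m_least])
  with m m_least show "Inf T \<in> T" "\<And>s. s \<in> T \<Longrightarrow> Inf T \<le> s" by auto
qed

lemma unit_spheres_meet:
  fixes p q :: complex
  assumes "cmod (q - p) \<le> 2"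
  shows "sphere p 1 \<inter> sphere q 1 \<noteq> {}"
proof (cases "q = p")
  case True
  then have "p + 1 \<in> sphere p 1 \<inter> sphere q 1" by (simp add: dist_norm)
  then show ?thesis by blast
next
  case False
  define z where "z = q - p"
  define d where "d = cmod z"
  have "0 < d" "d \<le> 2" using False assms unfolding d_def z_def by auto
  define h where "h = sqrt (1 - d\<^sup>2 / 4)"
  have "d\<^sup>2 \<le> 2\<^sup>2" using \<open>0 < d\<close> \<open>d \<le> 2\<close> by (intro power_mono) auto
  then have h2: "h\<^sup>2 = 1 - d\<^sup>2 / 4" unfolding h_def by simp
  \<comment> \<open>the intersection point is \<open>p + z w\<close>, with \<open>w\<close> and \<open>w - 1\<close> both of modulus \<open>1/d\<close>\<close>
  define w where "w = Complex (1/2) (h/d)"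
  have "(1/2)\<^sup>2 + (h/d)\<^sup>2 = (1/d)\<^sup>2" using h2 \<open>0 < d\<close> by (simp add: field_simps power2_eq_square)
  then have "cmod w = 1/d" "cmod (w - 1) = 1/d"
    using \<open>0 < d\<close> unfolding w_def cmod_def by simp_all
  moreover have "p - (p + z * w) = - (z * w)" "q - (p + z * w) = - (z * (w - 1))"
    unfolding z_def by (simp_all add: algebra_simps)
  ultimately have "dist p (p + z * w) = 1" "dist q (p + z * w) = 1"
    using \<open>0 < d\<close> unfolding dist_norm by (simp_all only: norm_minus_cancel norm_mult d_def[symmetric]) simp_all
  then show ?thesis by auto
qed

lemma parallelogram_law_midpoint:
  fixes x a b :: complex
  shows "cmod (x - a) ^ 2 + cmod (x - b) ^ 2 = 2 * cmod (x - (a + b) / 2) ^ 2 + cmod (a - b) ^ 2 / 2"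
  unfolding cmod_power2 by (simp add: power2_eq_square field_simps)

lemma pos_add_int: "pos cen f g i (s + of_int K) = pos cen f g i s"
proof -
  have "f i + 2 * pi * of_int (g i) * (s + of_int K) = f i + 2 * pi * of_int (g i) * s + 2 * pi * of_int (g i * K)"
    by (simp add: algebra_simps)
  then show ?thesis unfolding pos_def by (simp add: cis_mult[symmetric])
qed

lemma pos_eq_pos_imp_int:
  assumes "g i \<in> {-1, 1}" and "pos cen f g i s = pos cen f g i s'"
  obtains K :: int where "s = s' + of_int K"
proof -
  from assms(2) obtain k :: int where "f i + 2 * pi * of_int (g i) * s = f i + 2 * pi * of_int (g i) * s' + 2 * pi * of_int k"
    unfolding pos_def by (auto elim: cis_eq_cis_imp_int)
  then have "2 * pi * (of_int (g i) * (s - s')) = 2 * pi * of_int k" by (simp add: algebra_simps)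
  then have "of_int (g i) * (s - s') = of_int k" by simp
  then have "s = s' + of_int (g i * k)" using assms(1) by auto
  then show ?thesis by (rule that)
qed

lemma pos_in_sphere: "pos cen f g i s \<in> sphere (cen i) 1"
  unfolding pos_def by (simp add: dist_norm)

lemma cp_midpoint: "cp cen a b = (cen a + cen b) / 2"
proof -
  have "(cen a - cen b) / of_real (cmod (cen a - cen b)) = - ((cen b - cen a) / of_real (cmod (cen b - cen a)))"
    by (simp add: norm_minus_commute minus_divide_left)
  then show ?thesis unfolding cp_def lp_def by simp
qed

locale scs =
  fixes n :: nat and cen :: "nat \<Rightarrow> complex" and eps :: real and E :: "(nat \<times> nat) set"
    and f :: "nat \<Rightarrow> real" and g :: "nat \<Rightarrow> int"
  assumes is_SCS: "SCS n cen eps E f g"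
begin

lemma eps_bounds: "0 < eps" "eps < 1/2"
  using is_SCS unfolding SCS_def by auto

lemma edge_bounds:
  assumes "(a, b) \<in> E"
  shows "a < n" "b < n" "a \<noteq> b" "cmod (cen b - cen a) \<le> 2 + eps"
  using assms is_SCS unfolding SCS_def pot_edges_def by (auto simp: dist_norm norm_minus_commute)

lemma edge_sym: "(a, b) \<in> E \<Longrightarrow> (b, a) \<in> E"
  using is_SCS unfolding SCS_def by (meson symD)

lemma direction_unit: "i < n \<Longrightarrow> g i \<in> {-1, 1}"
  using is_SCS unfolding SCS_def by auto

lemma circles_disjoint: "i < n \<Longrightarrow> j < n \<Longrightarrow> i \<noteq> j \<Longrightarrow> sphere (cen i) 1 \<inter> sphere (cen j) 1 = {}"
  using is_SCS unfolding SCS_def by auto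

lemma centers_far: "i < n \<Longrightarrow> j < n \<Longrightarrow> i \<noteq> j \<Longrightarrow> 2 < cmod (cen j - cen i)"
  using unit_spheres_meet[of "cen j" "cen i"] circles_disjoint by force

lemma lp_inj:
  assumes "(i, j) \<in> E" "(i, j') \<in> E" "lp cen i j = lp cen i j'"
  shows "j = j'"
proof (rule ccontr)
  assume "j \<noteq> j'"
  define D where "D = cmod (cen j - cen i)"
  define D' where "D' = cmod (cen j' - cen i)"
  have D: "2 < D" "D \<le> 2 + eps" "2 < D'" "D' \<le> 2 + eps"
    using centers_far edge_bounds[OF assms(1)] edge_bounds[OF assms(2)] unfolding D_def D'_def by auto
  define e where "e = (cen j - cen i) / of_real D"
  have "(cen j' - cen i) / of_real D' = e" using assms(3) unfolding e_def lp_def D_def D'_def by simp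
  then have eq: "cen j - cen i = of_real D * e" "cen j' - cen i = of_real D' * e"
    using D unfolding e_def by (auto simp: field_simps)
  have "cen j - cen j' = (cen j - cen i) - (cen j' - cen i)" by simp
  also have "\<dots> = of_real (D - D') * e" unfolding eq by (simp add: algebra_simps)
  finally have "cmod (cen j - cen j') = \<bar>D - D'\<bar> * cmod e" by (simp only: norm_mult norm_of_real)
  moreover have "cmod e = 1" using D(1) unfolding e_def by (auto simp: norm_divide D_def)
  moreover have "\<bar>D - D'\<bar> < 2" using D eps_bounds by auto
  ultimately have "cmod (cen j - cen j') < 2" by simp
  then show False using centers_far \<open>j \<noteq> j'\<close> edge_bounds[OF assms(1)] edge_bounds[OF assms(2)] by fastforce
qed

lemma cp_edge_endpoint:
  assumes "(a, b) \<in> E" "(a', b') \<in> E" "cp cen a b = cp cen a' b'" "x = a' \<or> x = b'"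
  shows "x = a \<or> x = b"
proof (rule ccontr)
  assume far: "\<not> (x = a \<or> x = b)"
  have "x < n" "a < n" "b < n" using assms edge_bounds by auto
  \<comment> \<open>\<open>cen x\<close> lies within \<open>5/4\<close> of the common midpoint, so by the parallelogram law it cannot be farther than 2 from both \<open>cen a\<close> and \<open>cen b\<close>\<close>
  have mid: "(cen a + cen b) / 2 = (cen a' + cen b') / 2" using assms(3) by (simp add: cp_midpoint)
  have "cmod (cen x - (cen a' + cen b') / 2) = cmod (cen b' - cen a') / 2"
    using assms(4) by (auto simp: norm_divide norm_minus_commute field_simps simp flip: diff_divide_distrib)
  then have "cmod (cen x - (cen a + cen b) / 2) \<le> 5/4"
    unfolding mid using edge_bounds(4)[OF assms(2)] eps_bounds by simp
  moreover have "cmod (cen a - cen b) \<le> 5/2"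
    using edge_bounds(4)[OF assms(1)] eps_bounds by (simp add: norm_minus_commute)
  ultimately have "cmod (cen x - cen a) ^ 2 + cmod (cen x - cen b) ^ 2 \<le> 2 * (5/4) ^ 2 + (5/2) ^ 2 / 2"
    unfolding parallelogram_law_midpoint by (intro add_mono mult_left_mono divide_right_mono power_mono) auto
  moreover have "2 < cmod (cen x - cen a)" "2 < cmod (cen x - cen b)"
    using centers_far[of a x] centers_far[of b x] far \<open>x < n\<close> \<open>a < n\<close> \<open>b < n\<close> by auto
  then have "2 ^ 2 < cmod (cen x - cen a) ^ 2" "2 ^ 2 < cmod (cen x - cen b) ^ 2"
    using power_strict_mono[of 2 _ 2] by simp_all
  ultimately show False by (simp add: power_divide)
qed

lemma cp_edge_unique:
  assumes "(a, b) \<in> E" "(a', b') \<in> E" "cp cen a b = cp cen a' b'"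
  shows "(a', b') = (a, b) \<or> (a', b') = (b, a)"
  using cp_edge_endpoint[OF assms, of a'] cp_edge_endpoint[OF assms, of b'] edge_bounds(3)[OF assms(2)] by auto

abbreviation at_link :: "nat \<Rightarrow> real \<Rightarrow> bool" where
  "at_link i s \<equiv> \<exists>j. hit E cen f g i s j"

abbreviation has_link :: "nat \<Rightarrow> bool" where
  "has_link i \<equiv> \<exists>s. at_link i s"

lemma hit_edge: "hit E cen f g i s j \<Longrightarrow> (i, j) \<in> E"
  unfolding hit_def by simp

lemma hit_add_int: "hit E cen f g i (s + of_int K) j \<longleftrightarrow> hit E cen f g i s j"
  unfolding hit_def by (simp add: pos_add_int)

lemma at_link_add_int: "at_link i (s + of_int K) \<longleftrightarrow> at_link i s"
  by (simp add: hit_add_int)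

lemma at_link_diff_int: "at_link i (s - of_int K) \<longleftrightarrow> at_link i s"
  using at_link_add_int[of i "s - of_int K" K] by simp

lemma hit_sym: "hit E cen f g a s b \<Longrightarrow> hit E cen f g b s a"
  using is_SCS edge_sym unfolding hit_def SCS_def synchronized_def by fast

lemma hit_the: "hit E cen f g a s b \<Longrightarrow> (THE j. hit E cen f g a s j) = b"
  by (rule the_equality) (auto simp: hit_def intro: lp_inj)

lemma hit_times_differ_by_int:
  assumes "hit E cen f g i s j" "hit E cen f g i s' j"
  obtains K :: int where "s' = s + of_int K"
  using assms pos_eq_pos_imp_int[of g i cen f s' s] direction_unit edge_bounds(1) hit_edge
  unfolding hit_def by metis

lemma finite_link_times: "finite {s. at_link i s \<and> A \<le> s \<and> s \<le> B}"
proof -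
  have "finite {s. hit E cen f g i s j \<and> A \<le> s \<and> s \<le> B}" for j
  proof (cases "\<exists>s0. hit E cen f g i s0 j")
    case True
    then obtain s0 where s0: "hit E cen f g i s0 j" by blast
    have "{s. hit E cen f g i s j \<and> A \<le> s \<and> s \<le> B} \<subseteq> (\<lambda>K. s0 + of_int K) ` {\<lceil>A - s0\<rceil>..\<lfloor>B - s0\<rfloor>}"
    proof
      fix s assume s: "s \<in> {s. hit E cen f g i s j \<and> A \<le> s \<and> s \<le> B}"
      then obtain K where "s = s0 + of_int K" using hit_times_differ_by_int[OF s0] by blast
      with s show "s \<in> (\<lambda>K. s0 + of_int K) ` {\<lceil>A - s0\<rceil>..\<lfloor>B - s0\<rfloor>}"
        by (auto simp: ceiling_le_iff le_floor_iff)
    qed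
    then show ?thesis by (rule finite_subset) simp
  qed simp
  moreover have "{s. at_link i s \<and> A \<le> s \<and> s \<le> B} = (\<Union>j<n. {s. hit E cen f g i s j \<and> A \<le> s \<and> s \<le> B})"
    by (auto dest: edge_bounds(2)[OF hit_edge])
  ultimately show ?thesis by simp
qed

lemma has_link_of_edge:
  assumes "(i, k) \<in> E"
  shows "has_link i"
proof -
  define z where "z = cen k - cen i"
  have "z \<noteq> 0" using centers_far edge_bounds[OF assms] unfolding z_def by force
  have g: "g i \<in> {-1, 1}" using direction_unit edge_bounds(1)[OF assms] .
  \<comment> \<open>the robot faces \<open>C\<^sub>k\<close> when its angle equals \<open>Arg z\<close>\<close>
  define s where "s = (Arg z - f i) / (2 * pi * of_int (g i))"
  have "f i + 2 * pi * of_int (g i) * s = Arg z" unfolding s_def using g by auto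
  then have "pos cen f g i s = cen i + z / of_real (cmod z)"
    unfolding pos_def using cis_Arg[OF \<open>z \<noteq> 0\<close>] by (simp add: Complex.sgn_eq)
  then have "hit E cen f g i s k" unfolding hit_def lp_def z_def using assms by simp
  then show ?thesis by blast
qed

lemma has_link:
  assumes "i < n" "j < n" "i \<noteq> j"
  shows "has_link i"
proof -
  have "(i, j) \<in> (E \<inter> {..<n} \<times> {..<n})\<^sup>*" using is_SCS assms unfolding SCS_def connected_on_def by auto
  then obtain k where "(i, k) \<in> E" using assms(3) by (metis converse_rtranclE Int_iff)
  then show ?thesis by (rule has_link_of_edge)
qed

lemma least_link_time:
  assumes "has_link i" and above: "\<And>s. \<tau> + 1 \<le> s \<Longrightarrow> P s" and below: "\<And>s. P s \<Longrightarrow> \<tau> \<le> s"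
  defines "T \<equiv> {s. P s \<and> at_link i s}"
  shows "Inf T \<in> T" "\<And>s. s \<in> T \<Longrightarrow> Inf T \<le> s"
proof -
  obtain s0 where "at_link i s0" using assms(1) by blast
  define s1 where "s1 = s0 + of_int \<lceil>\<tau> + 1 - s0\<rceil>"
  have "\<tau> + 1 \<le> s1" unfolding s1_def using le_of_int_ceiling[of "\<tau> + 1 - s0"] by linarith
  then have "s1 \<in> T" unfolding T_def s1_def using above \<open>at_link i s0\<close> at_link_add_int by auto
  moreover have "finite {s \<in> T. s \<le> s1}"
    using below unfolding T_def by (auto intro: rev_finite_subset[OF finite_link_times[of i \<tau> s1]])
  ultimately show "Inf T \<in> T" "\<And>s. s \<in> T \<Longrightarrow> Inf T \<le> s"
    using Inf_minimum_if_finite_below by blast+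
qed

definition first_link :: "nat \<Rightarrow> real \<Rightarrow> real" where
  "first_link i \<tau> = Inf {s. \<tau> \<le> s \<and> at_link i s}"

definition next_link :: "nat \<Rightarrow> real \<Rightarrow> real" where
  "next_link i \<tau> = Inf {s. \<tau> < s \<and> at_link i s}"

lemma first_link:
  assumes "has_link i"
  shows "at_link i (first_link i \<tau>)" "\<tau> \<le> first_link i \<tau>"
    "\<And>s. at_link i s \<Longrightarrow> \<tau> \<le> s \<Longrightarrow> first_link i \<tau> \<le> s"
  using least_link_time[OF assms, of \<tau> "\<lambda>s. \<tau> \<le> s"] unfolding first_link_def by auto

lemma next_link:
  assumes "has_link i"
  shows "at_link i (next_link i \<tau>)" "\<tau> < next_link i \<tau>"
    "\<And>s. at_link i s \<Longrightarrow> \<tau> < s \<Longrightarrow> next_link i \<tau> \<le> s"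
  using least_link_time[OF assms, of \<tau> "\<lambda>s. \<tau> < s"] unfolding next_link_def by auto

lemma first_link_add_int:
  assumes "has_link i"
  shows "first_link i (\<tau> + of_int K) = first_link i \<tau> + of_int K"
proof (rule antisym)
  show "first_link i (\<tau> + of_int K) \<le> first_link i \<tau> + of_int K"
    by (rule first_link(3)[OF assms]) (simp_all add: at_link_add_int first_link(1,2)[OF assms])
  have "first_link i \<tau> \<le> first_link i (\<tau> + of_int K) - of_int K"
    by (rule first_link(3)[OF assms]) (simp_all add: at_link_diff_int first_link(1,2)[OF assms] algebra_simps)
  then show "first_link i \<tau> + of_int K \<le> first_link i (\<tau> + of_int K)" by simp
qed

lemma next_link_add_int:
  assumes "has_link i"
  shows "next_link i (\<tau> + of_int K) = next_link i \<tau> + of_int K"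
proof (rule antisym)
  show "next_link i (\<tau> + of_int K) \<le> next_link i \<tau> + of_int K"
    by (rule next_link(3)[OF assms]) (simp_all add: at_link_add_int next_link(1,2)[OF assms])
  have "next_link i \<tau> \<le> next_link i (\<tau> + of_int K) - of_int K"
    by (rule next_link(3)[OF assms]) (simp_all add: at_link_diff_int next_link(1,2)[OF assms] algebra_simps)
  then show "next_link i \<tau> + of_int K \<le> next_link i (\<tau> + of_int K)" by simp
qed

abbreviation events :: "nat \<Rightarrow> real \<Rightarrow> nat \<Rightarrow> nat \<times> real" where
  "events \<equiv> ev E cen f g"

abbreviation event_circle :: "nat \<Rightarrow> real \<Rightarrow> nat \<Rightarrow> nat" where
  "event_circle i t0 k \<equiv> fst (events i t0 k)"

abbreviation event_time :: "nat \<Rightarrow> real \<Rightarrow> nat \<Rightarrow> real" where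
  "event_time i t0 k \<equiv> snd (events i t0 k)"

definition step :: "nat \<times> real \<Rightarrow> nat \<times> real" where
  "step p = (let b = THE j. hit E cen f g (fst p) (snd p) j in (b, next_link b (snd p)))"

definition delay :: "int \<Rightarrow> nat \<times> real \<Rightarrow> nat \<times> real" where
  "delay K p = (fst p, snd p + of_int K)"

lemma ev_0: "events i t0 0 = (i, first_link i t0)"
  by (simp add: first_link_def)

lemma ev_Suc: "events i t0 (Suc k) = step (events i t0 k)"
  by (simp add: step_def next_link_def Let_def)

declare ev.simps [simp del]

lemma step:
  assumes "at_link (fst p) (snd p)"
  shows "hit E cen f g (fst p) (snd p) (fst (step p))" "at_link (fst (step p)) (snd (step p))"
    "snd p < snd (step p)" "\<And>s. at_link (fst (step p)) s \<Longrightarrow> snd p < s \<Longrightarrow> snd (step p) \<le> s"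
proof -
  obtain j where j: "hit E cen f g (fst p) (snd p) j" using assms by blast
  then have "step p = (j, next_link j (snd p))" unfolding step_def by (simp add: hit_the)
  moreover have "has_link j" using hit_sym[OF j] by blast
  ultimately show "hit E cen f g (fst p) (snd p) (fst (step p))" "at_link (fst (step p)) (snd (step p))"
    "snd p < snd (step p)" "\<And>s. at_link (fst (step p)) s \<Longrightarrow> snd p < s \<Longrightarrow> snd (step p) \<le> s"
    using j next_link by simp_all
qed

lemma step_delay:
  assumes "at_link (fst p) (snd p)"
  shows "step (delay K p) = delay K (step p)"
proof -
  obtain j where j: "hit E cen f g (fst p) (snd p) j" using assms by blast
  then have "hit E cen f g (fst p) (snd p + of_int K) j" by (simp add: hit_add_int)
  moreover have "has_link j" using hit_sym[OF j] by blast
  ultimately show ?thesis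
    using j unfolding step_def delay_def by (simp add: hit_the next_link_add_int)
qed

lemma step_inj:
  assumes p: "at_link (fst p) (snd p)" and q: "at_link (fst q) (snd q)" and "step p = step q"
  shows "p = q"
proof -
  define b where "b = fst (step p)"
  have hp: "hit E cen f g b (snd p) (fst p)" using hit_sym[OF step(1)[OF p]] unfolding b_def .
  have hq: "hit E cen f g b (snd q) (fst q)" using hit_sym[OF step(1)[OF q]] \<open>step p = step q\<close> unfolding b_def by simp
  \<comment> \<open>both times are the last link time of \<open>b\<close> before \<open>snd (step p)\<close>\<close>
  have "snd p = snd q"
  proof (rule ccontr)
    assume "snd p \<noteq> snd q"
    then consider "snd p < snd q" | "snd q < snd p" by linarith
    then show False
    proof cases
      case 1
      with hq have "snd (step p) \<le> snd q" using step(4)[OF p] unfolding b_def by blast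
      then show False using step(3)[OF q] \<open>step p = step q\<close> by simp
    next
      case 2
      with hp have "snd (step q) \<le> snd p" using step(4)[OF q] \<open>step p = step q\<close> unfolding b_def by auto
      then show False using step(3)[OF p] \<open>step p = step q\<close> by simp
    qed
  qed
  moreover have "fst p = fst q"
    using lp_inj[OF hit_edge[OF hp] hit_edge[OF hq]] hp hq \<open>snd p = snd q\<close> unfolding hit_def by simp
  ultimately show ?thesis by (simp add: prod_eq_iff)
qed

definition event_index :: "nat \<Rightarrow> real \<Rightarrow> real \<Rightarrow> nat" where
  "event_index i t0 S = (LEAST k. S \<le> event_time i t0 k)"

lemma trc_event_index: "trc E cen f g i t0 S = event_circle i t0 (event_index i t0 S)"
  unfolding trc_def event_index_def ..

context
  fixes i :: nat and t0 :: real
  assumes link: "has_link i"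
begin

lemma events_at_link: "at_link (event_circle i t0 k) (event_time i t0 k)"
proof (induction k)
  case 0
  then show ?case using first_link(1)[OF link] by (simp add: ev_0)
next
  case (Suc k)
  then show ?case using step(2) by (simp add: ev_Suc)
qed

lemma events_hit: "hit E cen f g (event_circle i t0 k) (event_time i t0 k) (event_circle i t0 (Suc k))"
  using step(1)[OF events_at_link] by (simp add: ev_Suc)

lemma events_strict_mono: "strict_mono (\<lambda>k. event_time i t0 k)"
  unfolding strict_mono_Suc_iff using step(3)[OF events_at_link] by (simp add: ev_Suc)

lemma events_ge: "t0 \<le> event_time i t0 k"
proof -
  have "t0 \<le> event_time i t0 0" using first_link(2)[OF link] by (simp add: ev_0)
  also have "\<dots> \<le> event_time i t0 k" using strict_mono_less_eq[OF events_strict_mono] by simp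
  finally show ?thesis .
qed

lemma events_circle_bound: "event_circle i t0 k < n"
  using events_at_link[of k] edge_bounds(1)[OF hit_edge] by blast

lemma events_unbounded: "\<exists>k. X \<le> event_time i t0 k"
proof (rule ccontr)
  assume "\<nexists>k. X \<le> event_time i t0 k"
  \<comment> \<open>otherwise infinitely many distinct link times would lie in \<open>[t0, X]\<close>\<close>
  then have "event_time i t0 k \<in> (\<Union>a<n. {s. at_link a s \<and> t0 \<le> s \<and> s \<le> X})" for k
    using events_circle_bound[of k] events_at_link[of k] events_ge[of k] by (simp add: not_le less_imp_le) blast
  then have "range (\<lambda>k. event_time i t0 k) \<subseteq> (\<Union>a<n. {s. at_link a s \<and> t0 \<le> s \<and> s \<le> X})"
    by blast
  then have "finite (range (\<lambda>k. event_time i t0 k))"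
    by (rule finite_subset) (simp add: finite_link_times)
  moreover have "inj (\<lambda>k. event_time i t0 k)" by (rule strict_mono_imp_inj_on[OF events_strict_mono])
  ultimately show False using finite_imageD by blast
qed

lemma event_index:
  assumes "t0 \<le> S"
  defines "k \<equiv> event_index i t0 S"
  shows "S \<le> event_time i t0 k" "\<And>m. m < k \<Longrightarrow> event_time i t0 m < S"
    "\<And>s. at_link (event_circle i t0 k) s \<Longrightarrow> S \<le> s \<Longrightarrow> event_time i t0 k \<le> s"
proof -
  show k: "S \<le> event_time i t0 k" unfolding k_def event_index_def using events_unbounded by (rule LeastI_ex)
  show before: "\<And>m. m < k \<Longrightarrow> event_time i t0 m < S"
    unfolding k_def event_index_def using not_less_Least by (metis not_le)
  fix s assume s: "at_link (event_circle i t0 k) s" "S \<le> s"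
  show "event_time i t0 k \<le> s"
  proof (cases k)
    case 0
    then show ?thesis using s assms first_link(3)[OF link] by (simp add: ev_0)
  next
    case (Suc k')
    then show ?thesis using step(4)[OF events_at_link[of k'], of s] s before[of k'] by (simp add: ev_Suc)
  qed
qed

end

lemma time_of_length_add: "t0 + (x + 2 * pi * of_int K) / (2 * pi) = t0 + x / (2 * pi) + of_int K"
  by (simp add: field_simps)

context
  fixes i w :: nat and t0 :: real and k :: nat and K :: int
  assumes link: "has_link i" and suffix: "events i t0 k = delay K (events w t0 0)"
begin

lemma suffix_has_link: "has_link w"
  using events_at_link[OF link, of t0 k] suffix unfolding delay_def by (auto simp: ev_0)

lemma events_suffix: "events i t0 (k + j) = delay K (events w t0 j)"
proof (induction j)
  case 0
  then show ?case using suffix by simp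
next
  case (Suc j)
  have "events i t0 (k + Suc j) = step (delay K (events w t0 j))" using Suc.IH by (simp add: ev_Suc)
  also have "\<dots> = delay K (events w t0 (Suc j))"
    using step_delay[OF events_at_link[OF suffix_has_link]] by (simp add: ev_Suc)
  finally show ?case .
qed

lemma events_before_suffix:
  assumes "m < k"
  shows "event_time i t0 m < t0 + of_int K"
proof -
  obtain k' where k: "k = Suc k'" using assms by (cases k) auto
  have "event_time i t0 m \<le> event_time i t0 k'"
    using assms k strict_mono_less_eq[OF events_strict_mono[OF link]] by simp
  also have "\<dots> < t0 + of_int K"
  proof (rule ccontr)
    assume "\<not> event_time i t0 k' < t0 + of_int K"
    \<comment> \<open>then shifting this link time of \<open>w\<close> back by \<open>K\<close> lands in \<open>[t0, first_link w t0)\<close>\<close>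
    moreover have "at_link w (event_time i t0 k')"
      using hit_sym[OF events_hit[OF link, of t0 k']] suffix k unfolding delay_def by (auto simp: ev_0)
    ultimately have "first_link w t0 \<le> event_time i t0 k' - of_int K"
      using first_link(3)[OF suffix_has_link] at_link_diff_int by simp
    moreover have "event_time i t0 k' < event_time i t0 k"
      using k strict_mono_less[OF events_strict_mono[OF link]] by simp
    ultimately show False using suffix unfolding delay_def by (simp add: ev_0)
  qed
  finally show ?thesis .
qed

lemma suffix_delay_nonneg: "0 \<le> K"
proof (cases k)
  case 0
  then show ?thesis using suffix unfolding delay_def by (auto simp: ev_0)
next
  case (Suc k')
  then show ?thesis using events_before_suffix[of 0] events_ge[OF link, of t0 0] by simp
qed

lemma event_index_suffix:
  assumes "t0 \<le> T"
  shows "event_index i t0 (T + of_int K) = k + event_index w t0 T"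
  unfolding event_index_def[of i]
proof (rule Least_equality)
  show "T + of_int K \<le> event_time i t0 (k + event_index w t0 T)"
    using event_index(1)[OF suffix_has_link assms] events_suffix unfolding delay_def by simp
next
  fix m assume m: "T + of_int K \<le> event_time i t0 m"
  show "k + event_index w t0 T \<le> m"
  proof (cases "m < k")
    case True
    then show ?thesis using m events_before_suffix assms by fastforce
  next
    case False
    then obtain j where "m = k + j" by (metis le_iff_add not_less)
    moreover have "event_index w t0 T \<le> j"
      using m events_suffix[of j] \<open>m = k + j\<close> unfolding event_index_def delay_def by (simp add: Least_le)
    ultimately show ?thesis by simp
  qed
qed

lemma crosses_dir_suffix:
  assumes "0 \<le> x"
  shows "crosses_dir E cen f g w t0 a b x \<longleftrightarrow> crosses_dir E cen f g i t0 a b (x + 2 * pi * of_int K)"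
proof
  assume "crosses_dir E cen f g w t0 a b x"
  then obtain j where "event_time w t0 j = t0 + x / (2 * pi)" "event_circle w t0 j = a" "event_circle w t0 (Suc j) = b"
    unfolding crosses_dir_def by blast
  then show "crosses_dir E cen f g i t0 a b (x + 2 * pi * of_int K)"
    using events_suffix[of j] events_suffix[of "Suc j"] suffix_delay_nonneg assms
    unfolding crosses_dir_def delay_def time_of_length_add
    by (intro conjI exI[of _ "k + j"]) auto
next
  assume "crosses_dir E cen f g i t0 a b (x + 2 * pi * of_int K)"
  then obtain m where m: "event_time i t0 m = t0 + x / (2 * pi) + of_int K"
    "event_circle i t0 m = a" "event_circle i t0 (Suc m) = b"
    unfolding crosses_dir_def time_of_length_add by blast
  have "t0 + of_int K \<le> event_time i t0 m" using m(1) assms by simp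
  then have "\<not> m < k" using events_before_suffix by (meson not_le)
  then obtain j where "m = k + j" by (metis le_iff_add not_less)
  then show "crosses_dir E cen f g w t0 a b x"
    using m events_suffix[of j] events_suffix[of "Suc j"] assms
    unfolding crosses_dir_def delay_def by (intro conjI exI[of _ j]) auto
qed

lemma reaches_suffix:
  assumes "0 \<le> x"
  shows "reaches E cen f g w t0 P x \<longleftrightarrow> reaches E cen f g i t0 P (x + 2 * pi * of_int K)"
proof -
  define T where "T = t0 + x / (2 * pi)"
  have "t0 \<le> T" unfolding T_def using assms by simp
  then have "trc E cen f g i t0 (T + of_int K) = trc E cen f g w t0 T"
    using events_suffix unfolding trc_event_index event_index_suffix[OF \<open>t0 \<le> T\<close>] delay_def by simp
  then show ?thesis
    using assms suffix_delay_nonneg unfolding reaches_def time_of_length_add T_def[symmetric]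
    by (simp add: pos_add_int)
qed

end

lemma has_link_bound: "has_link i \<Longrightarrow> i < n"
  using edge_bounds(1) hit_edge by blast

lemma event_index_start: "has_link i \<Longrightarrow> event_index i t0 t0 = 0"
  unfolding event_index_def using events_ge by (simp add: Least_eq_0)

lemma reaches_start: "has_link i \<Longrightarrow> reaches E cen f g i t0 (pos cen f g i t0) 0"
  unfolding reaches_def trc_event_index by (simp add: event_index_start ev_0)

lemma reached_robot_suffix:
  assumes link: "has_link i" and "w < n" and R: "reaches E cen f g i t0 (pos cen f g w t0) l"
  obtains k K where "events i t0 k = delay K (events w t0 0)" "l = 2 * pi * of_int K" "K = 0 \<Longrightarrow> w = i"
proof -
  define S where "S = t0 + l / (2 * pi)"
  have "t0 \<le> S" using R unfolding reaches_def S_def by simp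
  define k where "k = event_index i t0 S"
  have pos: "pos cen f g (event_circle i t0 k) S = pos cen f g w t0"
    using R unfolding reaches_def trc_event_index k_def S_def by simp
  have circle: "event_circle i t0 k = w"
  proof (rule ccontr)
    assume "event_circle i t0 k \<noteq> w"
    then have "sphere (cen (event_circle i t0 k)) 1 \<inter> sphere (cen w) 1 = {}"
      using circles_disjoint[OF events_circle_bound[OF link] \<open>w < n\<close>] by blast
    then show False using pos_in_sphere[of cen f g "event_circle i t0 k" S] pos_in_sphere[of cen f g w t0] pos by auto
  qed
  obtain K where K: "S = t0 + of_int K"
    using pos circle pos_eq_pos_imp_int direction_unit[OF \<open>w < n\<close>] by metis
  have "has_link w" using events_at_link[OF link, of t0 k] circle by auto
  have "event_time i t0 k = first_link w S"
  proof (rule antisym)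
    show "event_time i t0 k \<le> first_link w S"
      using event_index(3)[OF link \<open>t0 \<le> S\<close>] first_link(1,2)[OF \<open>has_link w\<close>] circle k_def by auto
    show "first_link w S \<le> event_time i t0 k"
      using first_link(3)[OF \<open>has_link w\<close>] events_at_link[OF link] event_index(1)[OF link \<open>t0 \<le> S\<close>] circle k_def
      by auto
  qed
  also have "\<dots> = first_link w t0 + of_int K" unfolding K by (rule first_link_add_int[OF \<open>has_link w\<close>])
  finally have "events i t0 k = delay K (events w t0 0)"
    using circle unfolding delay_def by (simp add: ev_0 prod_eq_iff)
  moreover have "l = 2 * pi * of_int K" using K unfolding S_def by (simp add: field_simps)
  moreover have "w = i" if "K = 0"
    using circle K that unfolding k_def by (simp add: event_index_start[OF link] ev_0)
  ultimately show thesis by (rule that)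
qed

lemma reached_robot:
  assumes link: "has_link i" and "w < n" and R: "reaches E cen f g i t0 (pos cen f g w t0) l"
  obtains N :: nat where "l = 2 * pi * real N" "N = 0 \<Longrightarrow> w = i"
    "\<And>x c. 0 \<le> x \<Longrightarrow> crosses E cen f g w t0 c x \<longleftrightarrow> crosses E cen f g i t0 c (x + l)"
    "\<And>x P. 0 \<le> x \<Longrightarrow> reaches E cen f g w t0 P x \<longleftrightarrow> reaches E cen f g i t0 P (x + l)"
proof -
  obtain k K where suffix: "events i t0 k = delay K (events w t0 0)" and l: "l = 2 * pi * of_int K"
    and "K = 0 \<Longrightarrow> w = i"
    using reached_robot_suffix[OF assms] by blast
  moreover have "0 \<le> K" by (rule suffix_delay_nonneg[OF link suffix])
  ultimately show thesis
    using crosses_dir_suffix[OF link suffix] reaches_suffix[OF link suffix]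
    by (intro that[of "nat K"]) (auto simp: crosses_def)
qed

lemma events_repeat_from_start:
  assumes link: "has_link i" and "events i t0 (j + p) = delay K (events i t0 j)"
  shows "events i t0 p = delay K (events i t0 0)"
  using assms(2)
proof (induction j)
  case (Suc j)
  have "step (events i t0 (j + p)) = step (delay K (events i t0 j))"
    using Suc.prems step_delay[OF events_at_link[OF link]] by (simp add: ev_Suc)
  moreover have "at_link (fst (delay K (events i t0 j))) (snd (delay K (events i t0 j)))"
    using events_at_link[OF link, of t0 j] unfolding delay_def by (simp only: fst_conv snd_conv at_link_add_int)
  ultimately have "events i t0 (j + p) = delay K (events i t0 j)"
    using step_inj[OF events_at_link[OF link]] by blast
  then show ?case by (rule Suc.IH)
qed simp

lemma repeated_event_returns:
  assumes link: "has_link i" and "events i t0 (j + p) = delay K (events i t0 j)" and "0 < p"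
  shows "0 < K" "reaches E cen f g i t0 (pos cen f g i t0) (2 * pi * of_int K)"
proof -
  have suffix: "events i t0 p = delay K (events i t0 0)" by (rule events_repeat_from_start[OF assms(1,2)])
  have "event_time i t0 0 < event_time i t0 p" using strict_mono_less[OF events_strict_mono[OF link]] \<open>0 < p\<close> by simp
  then show "0 < K" using suffix unfolding delay_def by simp
  show "reaches E cen f g i t0 (pos cen f g i t0) (2 * pi * of_int K)"
    using reaches_suffix[OF link suffix, of 0 "pos cen f g i t0"] reaches_start[OF link, of t0] by simp
qed

lemma crosses_dir_edge: "has_link i \<Longrightarrow> crosses_dir E cen f g i t0 a b x \<Longrightarrow> (a, b) \<in> E"
  unfolding crosses_dir_def using events_hit hit_edge by metis

lemma crosses_nonneg: "crosses E cen f g i t0 c x \<Longrightarrow> 0 \<le> x"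
  unfolding crosses_def crosses_dir_def by blast

lemma crosses_dir_no_repeat:
  assumes link: "has_link i"
    and no_return: "\<And>l. 0 < l \<Longrightarrow> l \<le> d \<Longrightarrow> \<not> reaches E cen f g i t0 (pos cen f g i t0) l"
    and x: "crosses_dir E cen f g i t0 a b x" and y: "crosses_dir E cen f g i t0 a b y"
    and "x < y" "y \<le> x + d"
  shows False
proof -
  obtain k where k: "event_time i t0 k = t0 + x / (2 * pi)" "event_circle i t0 k = a" "event_circle i t0 (Suc k) = b"
    using x unfolding crosses_dir_def by blast
  obtain k' where k': "event_time i t0 k' = t0 + y / (2 * pi)" "event_circle i t0 k' = a" "event_circle i t0 (Suc k') = b"
    using y unfolding crosses_dir_def by blast
  \<comment> \<open>the same link is used twice, so the second event is a whole number of tours after the first\<close>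
  obtain K where K: "event_time i t0 k' = event_time i t0 k + of_int K"
    using hit_times_differ_by_int events_hit[OF link, of t0 k] events_hit[OF link, of t0 k'] k k' by metis
  have "event_time i t0 k < event_time i t0 k'" using k(1) k'(1) \<open>x < y\<close> by (simp add: divide_strict_right_mono)
  then have "k < k'" using strict_mono_less[OF events_strict_mono[OF link]] by blast
  then have "events i t0 (k + (k' - k)) = delay K (events i t0 k)"
    using K k(2) k'(2) unfolding delay_def by (simp add: prod_eq_iff)
  from repeated_event_returns[OF link this] \<open>k < k'\<close>
  have "0 < K" "reaches E cen f g i t0 (pos cen f g i t0) (2 * pi * of_int K)" by simp_all
  moreover have "2 * pi * of_int K = y - x" using K k(1) k'(1) by (simp add: field_simps)
  ultimately show False using no_return[of "y - x"] \<open>x < y\<close> \<open>y \<le> x + d\<close> by simp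
qed

lemma simple_path_to_robot:
  assumes link: "has_link u" and "v < n" and "reaches E cen f g u t0 (pos cen f g v t0) l"
  obtains d where "ring_simple_path E cen f g u v t0 d"
proof -
  define reached where "reached N \<longleftrightarrow> reaches E cen f g u t0 (pos cen f g v t0) (2 * pi * real N)" for N
  obtain N where "l = 2 * pi * real N" using reached_robot[OF link \<open>v < n\<close> assms(3)] by metis
  then have "reached N" using assms(3) unfolding reached_def by simp
  define N0 where "N0 = (LEAST N. reached N)"
  have "reached N0" unfolding N0_def by (rule LeastI) fact
  \<comment> \<open>a return to \<open>u\<close> strictly before the shortest path to \<open>v\<close> would give a shorter one\<close>
  have "\<not> reaches E cen f g u t0 (pos cen f g u t0) l'" if "0 < l'" "l' \<le> 2 * pi * real N0" for l'
  proof
    assume return: "reaches E cen f g u t0 (pos cen f g u t0) l'"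
    obtain N' where N': "l' = 2 * pi * real N'"
      and shift: "\<And>x P. 0 \<le> x \<Longrightarrow> reaches E cen f g u t0 P x \<longleftrightarrow> reaches E cen f g u t0 P (x + l')"
      using reached_robot[OF link has_link_bound[OF link] return] by metis
    have "0 < N'" "N' \<le> N0" using that N' by (auto simp: zero_less_mult_iff)
    then have "2 * pi * real N0 = 2 * pi * real (N0 - N') + l'" using N' by (simp add: of_nat_diff algebra_simps)
    then have "reached (N0 - N')" using shift[of "2 * pi * real (N0 - N')"] \<open>reached N0\<close> unfolding reached_def by simp
    moreover have "N0 - N' < N0" using \<open>0 < N'\<close> \<open>N' \<le> N0\<close> by simp
    ultimately show False unfolding N0_def using not_less_Least by blast
  qed
  then have "ring_simple_path E cen f g u v t0 (2 * pi * real N0)"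
    using \<open>reached N0\<close> unfolding ring_simple_path_def reached_def by blast
  then show thesis by (rule that)
qed

lemma tie_of_prevents:
  assumes link: "has_link u" and "v < n" "u \<noteq> v"
    and path: "ring_simple_path E cen f g u v t0 d" and "prevents E cen f g u v t0"
  shows "tie_length E cen f g u t0 d"
proof -
  have to_v: "reaches E cen f g u t0 (pos cen f g v t0) d"
    and no_return: "\<And>l. 0 < l \<Longrightarrow> l \<le> d \<Longrightarrow> \<not> reaches E cen f g u t0 (pos cen f g u t0) l"
    using path unfolding ring_simple_path_def by auto
  obtain N where "d = 2 * pi * real N" "N = 0 \<Longrightarrow> v = u"
    and ring_v: "\<And>x c. 0 \<le> x \<Longrightarrow> crosses E cen f g v t0 c x \<longleftrightarrow> crosses E cen f g u t0 c (x + d)"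
    using reached_robot[OF link \<open>v < n\<close> to_v] by metis
  then have "0 < d" using \<open>u \<noteq> v\<close> by (cases "N = 0") auto
  obtain c l where "crosses E cen f g v t0 c l" and cu: "crosses E cen f g u t0 c l"
    using \<open>prevents E cen f g u v t0\<close> unfolding prevents_def by blast
  then have cu': "crosses E cen f g u t0 c (l + d)" using ring_v crosses_nonneg by blast
  obtain a b where ab: "crosses_dir E cen f g u t0 a b l" "cp cen a b = c"
    using cu unfolding crosses_def by blast
  have direction: "(a', b') = (a, b) \<or> (a', b') = (b, a)"
    if "crosses_dir E cen f g u t0 a' b' x" "cp cen a' b' = c" for a' b' x
    using cp_edge_unique crosses_dir_edge[OF link] ab that by metis
  have no_repeat: "crosses_dir E cen f g u t0 a' b' x \<Longrightarrow> crosses_dir E cen f g u t0 a' b' y \<Longrightarrow> x < y \<Longrightarrow> y \<le> x + d \<Longrightarrow> False"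
    for a' b' x y using crosses_dir_no_repeat[OF link no_return] by blast
  obtain a' b' where ab': "crosses_dir E cen f g u t0 a' b' (l + d)" "cp cen a' b' = c"
    using cu' unfolding crosses_def by blast
  then have ba: "crosses_dir E cen f g u t0 b a (l + d)"
    using direction no_repeat[OF ab(1)] \<open>0 < d\<close> by fastforce
  have "\<not> crosses E cen f g u t0 c x" if "l < x" "x < l + d" for x
  proof
    assume "crosses E cen f g u t0 c x"
    then obtain a' b' where "crosses_dir E cen f g u t0 a' b' x" "cp cen a' b' = c"
      unfolding crosses_def by blast
    then show False
      using direction no_repeat[OF ab(1)] no_repeat[OF _ ba] that by fastforce
  qed
  then show ?thesis
    unfolding tie_length_def self_crosses_def
    using ab ba cu cu' \<open>0 < d\<close> by (intro exI[of _ c] exI[of _ l] exI[of _ "l + d"]) auto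
qed

lemma prevents_of_tie:
  assumes "has_link u" "has_link v" and "tie_length E cen f g u t0 T"
    and "reaches E cen f g u t0 (pos cen f g v t0) T \<or> reaches E cen f g v t0 (pos cen f g u t0) T"
  shows "prevents E cen f g u v t0"
proof -
  obtain c l1 l2 where c: "crosses E cen f g u t0 c l1" "crosses E cen f g u t0 c l2" "T = l2 - l1"
    using assms(3) unfolding tie_length_def by blast
  from assms(4) show ?thesis
  proof
    assume "reaches E cen f g u t0 (pos cen f g v t0) T"
    from reached_robot[OF assms(1) has_link_bound[OF assms(2)] this] c crosses_nonneg
    have "crosses E cen f g v t0 c l1" by (metis diff_add_cancel add.commute)
    then show ?thesis unfolding prevents_def using c by blast
  next
    assume "reaches E cen f g v t0 (pos cen f g u t0) T"
    from reached_robot[OF assms(2) has_link_bound[OF assms(1)] this] c crosses_nonneg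
    have "crosses E cen f g v t0 c l2" by (metis diff_add_cancel add.commute)
    then show ?thesis unfolding prevents_def using c by blast
  qed
qed

end

theorem lemma8:
  fixes n m :: nat and cen :: "nat \<Rightarrow> complex" and eps :: real
    and E :: "(nat \<times> nat) set" and f :: "nat \<Rightarrow> real" and g :: "nat \<Rightarrow> int"
    and occ :: "nat set" and t0 :: real and u v :: nat
  assumes "SCS n cen eps E f g"
    and "partial_config n m occ"
    and "u \<in> occ" and "v \<in> occ" and "u \<noteq> v"
    and "same_ring E cen f g u v t0"
  shows "prevents E cen f g u v t0 \<longleftrightarrow>
         (\<exists>l. tie_length E cen f g u t0 l \<and>
              (ring_simple_path E cen f g u v t0 l \<or> ring_simple_path E cen f g v u t0 l))"
proof -
  interpret scs n cen eps E f g by (rule scs.intro) fact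
  have "u < n" "v < n" using assms(2-4) unfolding partial_config_def by auto
  then have links: "has_link u" "has_link v" using has_link \<open>u \<noteq> v\<close> by metis+
  obtain l where "reaches E cen f g u t0 (pos cen f g v t0) l"
    using assms(6) unfolding same_ring_def by blast
  then obtain d where path: "ring_simple_path E cen f g u v t0 d"
    using simple_path_to_robot[OF links(1) \<open>v < n\<close>] by metis
  show ?thesis
  proof
    assume "prevents E cen f g u v t0"
    then have "tie_length E cen f g u t0 d" using tie_of_prevents[OF links(1) \<open>v < n\<close> \<open>u \<noteq> v\<close> path] by blast
    then show "\<exists>l. tie_length E cen f g u t0 l \<and>
        (ring_simple_path E cen f g u v t0 l \<or> ring_simple_path E cen f g v u t0 l)" using path by blast
  next
    assume "\<exists>l. tie_length E cen f g u t0 l \<and>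
        (ring_simple_path E cen f g u v t0 l \<or> ring_simple_path E cen f g v u t0 l)"
    then show "prevents E cen f g u v t0"
      using prevents_of_tie[OF links] unfolding ring_simple_path_def by blast
  qed
qed

end
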